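(* Assume (C1)–(C4). Define the set-valued map $G$ on $[0,1]\times\mathbb R^n$ by $$G(t,y)=\left\{\left(\frac{\rho}{L(t,y,w)+\beta},\;\frac{\rho\, g(t,y)w}{L(t,y,w)+\beta}\right)\in\mathbb R\times\mathbb R^n:\ w\in\mathbb R^m,\ \rho\in[0,1]\right\}.$$ Then $G(t,y)$ is a nonempty convex compact set for every $(t,y)$, and $G$ is Lipschitz continuous (with respect to the Hausdorff distance) on $\Omega$.
   Context: Let $n,m\ge1$; $|\cdot|$ denotes the Euclidean norm (operator norm for matrices) and $B_n$ the closed unit ball of $\mathbb R^n$. Let $L:[0,1]\times\mathbb R^n\times\mathbb R^m\to\mathbb R$ and $g:[0,1]\times\mathbb R^n\to\mathbb R^{n\times m}$ be continuously differentiable. (C1) there is a function $\theta:[0,\infty)\to\mathbb R$ with $L(t,x,u)\ge\theta(|u|)>0$ for all $t,x,u$ and $\lim_{r\to\infty}r/\theta(r)=0$; (C2) there is $\mu>0$ with $L(t,x,u)+\langle\nabla_uL(t,x,u),v-u\rangle+\frac{\mu}{2}|v-u|^2\le L(t,x,v)$ for all $t,x,u,v$; (C3) there are constants $\xi>0,\delta>0$ with $|\nabla_{(t,x)}L(t,x,u)|\,|g(t,x)u|\le\xi L(t,x,u)+\delta$ for all $t,x,u$; (C4) there are constants $c_g>0$, $c_{\nabla g}>0$ with $|g(t,x)|\le c_g$ and $|\nabla_{(t,x)}g(t,x)|\le c_{\nabla g}$ for all $t,x$. Constants: fix $r_0>0$ such that $\theta(r)\ge r$ for all $r\ge r_0$;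 $c=r_0+\int_0^1L(t,0,0)\,dt$; $\Omega=[0,1]\times c_g c\,B_n$; $\sigma(r)=\max_{(t,x)\in\Omega,\,|u|\le r}\big(\langle\nabla_uL(t,x,u),u\rangle-L(t,x,u)\big)$; fix $T_0\in(0,1)$ such that $\beta:=\sigma((c+1)/T_0)>\delta/\xi$. *)

theory Defs
  imports "HOL-Analysis.Analysis"
begin

definition C1_on ::
  "'a::real_normed_vector set \<Rightarrow> ('a \<Rightarrow> 'b::real_normed_vector) \<Rightarrow> ('a \<Rightarrow> ('a \<Rightarrow>\<^sub>L 'b)) \<Rightarrow> bool"
  where "C1_on S f f' \<longleftrightarrow>
           (\<forall>p\<in>S. (f has_derivative blinfun_apply (f' p)) (at p within S)) \<and> continuous_on S f'"

definition hausdorff_dist :: "'a::metric_space set \<Rightarrow> 'a set \<Rightarrow> real"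
  where "hausdorff_dist A B =
           max (SUP a\<in>A. infdist a B) (SUP b\<in>B. infdist b A)"

end

theory Submission
  imports Defs
begin

text \<open>Writing \<open>s = \<rho> / (L + \<beta>)\<close>, the set \<open>G(t, y)\<close> consists of the points \<open>(s, s g(t, y) w)\<close>
  with \<open>s \<ge> 0\<close> and \<open>s (L(t, y, w) + \<beta>) \<le> 1\<close>. It is convex because \<open>L\<close> is convex in the control
  (by the tangent inequality (C2)), and compact because superlinear growth (C1) forces
  \<open>s |w| \<rightarrow> 0\<close> as \<open>s \<rightarrow> 0\<close>.

  For the Lipschitz estimate, a point \<open>\<rho> (S, S g(p) w)\<close> of \<open>G(p)\<close>, \<open>S = 1 / (L(p, w) + \<beta>)\<close>, is
  compared with points of \<open>G(q)\<close> built from the same control \<open>w\<close>. By (C3) and (C4) the map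
  \<open>z \<mapsto> g(z) w / (L(z, w) + \<beta>)\<close> is Lipschitz uniformly in \<open>w\<close>. If \<open>S \<le> 1 / (L(q, w) + \<beta>)\<close>
  the first coordinate is kept; if \<open>S\<close> is at most half of \<open>b = 1 / (L(q, 0) + \<beta>)\<close>, the point
  \<open>(b, 0)\<close> of \<open>G(q)\<close> is mixed in to restore it; otherwise \<open>L(p, w)\<close> is bounded, hence so is \<open>w\<close>,
  and on bounded controls \<open>1 / (L + \<beta>)\<close> is Lipschitz in the state.\<close>

lemma convex_on_if_above_tangents:
  fixes f :: "'a::real_vector \<Rightarrow> real"
  assumes lin: "\<And>x. linear (D x)" and tangent: "\<And>x y. f x + D x (y - x) \<le> f y"
  shows "convex_on UNIV f"
proof (rule convex_onI)
  fix t :: real and x y :: 'a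
  assume "0 < t" "t < 1"
  define z where "z = (1 - t) *\<^sub>R x + t *\<^sub>R y"
  have "(1 - t) *\<^sub>R (x - z) + t *\<^sub>R (y - z) = 0"
    unfolding z_def by (simp add: algebra_simps)
  then have "(1 - t) * D z (x - z) + t * D z (y - z) = 0"
    using linear_add[OF lin] linear_scale[OF lin] linear_0[OF lin] by (metis real_scaleR_def)
  moreover have "(1 - t) * (f z + D z (x - z)) \<le> (1 - t) * f x"
    using tangent \<open>t < 1\<close> by (intro mult_left_mono) auto
  moreover have "t * (f z + D z (y - z)) \<le> t * f y"
    using tangent \<open>0 < t\<close> by (intro mult_left_mono) auto
  ultimately show "f ((1 - t) *\<^sub>R x + t *\<^sub>R y) \<le> (1 - t) * f x + t * f y"
    unfolding z_def[symmetric] by (simp add: algebra_simps)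
qed simp

lemma hausdorff_dist_le:
  assumes "A \<noteq> {}" "B \<noteq> {}"
    and "\<And>a. a \<in> A \<Longrightarrow> infdist a B \<le> K" and "\<And>b. b \<in> B \<Longrightarrow> infdist b A \<le> K"
  shows "hausdorff_dist A B \<le> K"
  unfolding hausdorff_dist_def using assms by (simp add: cSUP_least)

lemma dist_scaleR_le:
  fixes x y :: "'a::real_normed_vector"
  assumes "0 \<le> \<rho>" "\<rho> \<le> 1"
  shows "dist (\<rho> *\<^sub>R x) (\<rho> *\<^sub>R y) \<le> dist x y"
  using assms unfolding dist_norm scaleR_diff_right[symmetric] norm_scaleR
  by (simp add: mult_left_le_one_le)

text \<open>The parameter \<open>z\<close> stands for \<open>(t, x)\<close>, \<open>DL z u\<close> is the derivative of \<open>L\<close> in \<open>z\<close> and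
  \<open>Dg z\<close> that of \<open>g\<close>. Condition (C1) enters only as uniform superlinear growth and (C3) as
  \<open>DL_g_bound\<close>, with \<open>\<kappa> = max \<xi> (\<delta> / \<beta>)\<close>.\<close>

locale rescaled_dynamics =
  fixes S :: "'z::real_normed_vector set"
    and L :: "'z \<Rightarrow> 'u::euclidean_space \<Rightarrow> real"
    and DL :: "'z \<Rightarrow> 'u \<Rightarrow> 'z \<Rightarrow> real"
    and g :: "'z \<Rightarrow> 'u \<Rightarrow>\<^sub>L 'v::euclidean_space"
    and Dg :: "'z \<Rightarrow> 'z \<Rightarrow> ('u \<Rightarrow>\<^sub>L 'v)"
    and c_g c_dg \<kappa> \<beta> :: real
  assumes convex_S: "convex S"
    and L_nonneg: "z \<in> S \<Longrightarrow> 0 \<le> L z u"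
    and L_superlinear: "\<epsilon> > 0 \<Longrightarrow> \<exists>R. \<forall>z\<in>S. \<forall>u. R \<le> norm u \<longrightarrow> norm u \<le> \<epsilon> * L z u"
    and L_convex: "z \<in> S \<Longrightarrow> convex_on UNIV (L z)"
    and L_deriv: "z \<in> S \<Longrightarrow> ((\<lambda>z. L z u) has_derivative DL z u) (at z within S)"
    and DL_g_bound: "z \<in> S \<Longrightarrow> onorm (DL z u) * norm (g z u) \<le> \<kappa> * (L z u + \<beta>)"
    and g_bound: "z \<in> S \<Longrightarrow> norm (g z) \<le> c_g"
    and g_deriv: "z \<in> S \<Longrightarrow> (g has_derivative Dg z) (at z within S)"
    and Dg_bound: "z \<in> S \<Longrightarrow> onorm (Dg z) \<le> c_dg"
    and kappa_nonneg: "0 \<le> \<kappa>"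
    and beta_pos: "0 < \<beta>"
begin

definition time_scale :: "'z \<Rightarrow> 'u \<Rightarrow> real"
  where "time_scale z w = inverse (L z w + \<beta>)"

definition V :: "'z \<Rightarrow> 'u \<Rightarrow> 'v"
  where "V z w = time_scale z w *\<^sub>R g z w"

definition G :: "'z \<Rightarrow> (real \<times> 'v) set"
  where "G z = {(\<rho> / (L z w + \<beta>), (\<rho> / (L z w + \<beta>)) *\<^sub>R g z w) | w \<rho>. \<rho> \<in> {0..1}}"

lemma L_beta_pos: "z \<in> S \<Longrightarrow> 0 < L z u + \<beta>"
  using L_nonneg beta_pos by (simp add: add_nonneg_pos)

lemma time_scale_pos: "z \<in> S \<Longrightarrow> 0 < time_scale z u"
  using L_beta_pos by (simp add: time_scale_def)

lemma time_scale_le: "z \<in> S \<Longrightarrow> time_scale z u \<le> inverse \<beta>"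
  using L_nonneg beta_pos by (simp add: time_scale_def le_imp_inverse_le)

lemma G_eq: "G z = {\<rho> *\<^sub>R (time_scale z w, V z w) | w \<rho>. \<rho> \<in> {0..1}}"
  unfolding G_def V_def time_scale_def by (simp add: divide_inverse)

lemma vertex_mem_G: "(time_scale z w, V z w) \<in> G z"
  unfolding G_eq by (intro CollectI exI[of _ w] exI[of _ 1] conjI) simp_all

lemma mem_G_iff:
  assumes "z \<in> S"
  shows "P \<in> G z \<longleftrightarrow> (\<exists>w s. 0 \<le> s \<and> s * (L z w + \<beta>) \<le> 1 \<and> P = (s, s *\<^sub>R g z w))"
proof -
  have eq: "(\<exists>\<rho>\<in>{0..1}. P = (\<rho> / (L z w + \<beta>), (\<rho> / (L z w + \<beta>)) *\<^sub>R g z w)) \<longleftrightarrow>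
        (\<exists>s. 0 \<le> s \<and> s * (L z w + \<beta>) \<le> 1 \<and> P = (s, s *\<^sub>R g z w))" for w
  proof
    assume "\<exists>\<rho>\<in>{0..1}. P = (\<rho> / (L z w + \<beta>), (\<rho> / (L z w + \<beta>)) *\<^sub>R g z w)"
    then obtain \<rho> where "\<rho> \<in> {0..1}" "P = (\<rho> / (L z w + \<beta>), (\<rho> / (L z w + \<beta>)) *\<^sub>R g z w)"
      by blast
    then show "\<exists>s. 0 \<le> s \<and> s * (L z w + \<beta>) \<le> 1 \<and> P = (s, s *\<^sub>R g z w)"
      using L_beta_pos[OF assms, of w] by (intro exI[of _ "\<rho> / (L z w + \<beta>)"]) simp
  next
    assume "\<exists>s. 0 \<le> s \<and> s * (L z w + \<beta>) \<le> 1 \<and> P = (s, s *\<^sub>R g z w)"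
    then obtain s where s: "0 \<le> s" "s * (L z w + \<beta>) \<le> 1" and P: "P = (s, s *\<^sub>R g z w)"
      by blast
    have "s * (L z w + \<beta>) / (L z w + \<beta>) = s"
      using L_beta_pos[OF assms, of w] by simp
    moreover have "s * (L z w + \<beta>) \<in> {0..1}"
      using s L_beta_pos[OF assms, of w] by simp
    ultimately show "\<exists>\<rho>\<in>{0..1}. P = (\<rho> / (L z w + \<beta>), (\<rho> / (L z w + \<beta>)) *\<^sub>R g z w)"
      unfolding P by metis
  qed
  then show ?thesis
    unfolding G_def by (simp only: mem_Collect_eq Bex_def) metis
qed

lemma zero_mem_G:
  assumes "z \<in> S"
  shows "(0, 0) \<in> G z"
  unfolding mem_G_iff[OF \<open>z \<in> S\<close>] by (intro exI[of _ 0]) simp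

lemma convex_G:
  assumes z: "z \<in> S"
  shows "convex (G z)"
  unfolding convex_def
proof (intro ballI allI impI)
  fix P1 P2 and u v :: real
  assume P1: "P1 \<in> G z" and P2: "P2 \<in> G z" and uv: "0 \<le> u" "0 \<le> v" "u + v = 1"
  obtain w1 s1 where 1: "0 \<le> s1" "s1 * (L z w1 + \<beta>) \<le> 1" "P1 = (s1, s1 *\<^sub>R g z w1)"
    using P1 mem_G_iff[OF z] by blast
  obtain w2 s2 where 2: "0 \<le> s2" "s2 * (L z w2 + \<beta>) \<le> 1" "P2 = (s2, s2 *\<^sub>R g z w2)"
    using P2 mem_G_iff[OF z] by blast
  define s where "s = u * s1 + v * s2"
  have "s \<ge> 0"
    unfolding s_def using 1 2 uv by simp
  have comb: "u *\<^sub>R P1 + v *\<^sub>R P2 = (s, g z ((u * s1) *\<^sub>R w1 + (v * s2) *\<^sub>R w2))"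
    unfolding 1 2 s_def by (simp add: blinfun.add_right blinfun.scaleR_right)
  show "u *\<^sub>R P1 + v *\<^sub>R P2 \<in> G z"
  proof (cases "s = 0")
    case True
    then have "u * s1 = 0" "v * s2 = 0"
      using 1 2 uv unfolding s_def by (smt (verit) mult_nonneg_nonneg)+
    then have "(u * s1) *\<^sub>R w1 + (v * s2) *\<^sub>R w2 = 0"
      by (simp only: scaleR_zero_left add_0_left)
    then show ?thesis
      using comb True zero_mem_G[OF z] by simp
  next
    case False
    with \<open>s \<ge> 0\<close> have "s > 0" by simp
    define t where "t = v * s2 / s"
    have t: "0 \<le> t" "t \<le> 1" "1 - t = u * s1 / s"
      unfolding t_def using \<open>s > 0\<close> 1 2 uv by (auto simp: field_simps s_def)
    define w where "w = (1 - t) *\<^sub>R w1 + t *\<^sub>R w2"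
    have st: "s * (1 - t) = u * s1" "s * t = v * s2"
      unfolding t(3) unfolding t_def using \<open>s > 0\<close> by simp_all
    then have sw: "s *\<^sub>R w = (u * s1) *\<^sub>R w1 + (v * s2) *\<^sub>R w2"
      unfolding w_def by (simp add: scaleR_add_right)
    have "s * (L z w + \<beta>) \<le> s * ((1 - t) * L z w1 + t * L z w2 + \<beta>)"
      using convex_onD[OF L_convex[OF z] t(1,2)] \<open>s > 0\<close> unfolding w_def by simp
    also have "\<dots> = (s * (1 - t)) * L z w1 + (s * t) * L z w2 + s * \<beta>"
      by (simp add: algebra_simps)
    also have "\<dots> = u * (s1 * (L z w1 + \<beta>)) + v * (s2 * (L z w2 + \<beta>))"
      unfolding st by (simp add: s_def algebra_simps)
    also have "\<dots> \<le> u + v"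
      using 1 2 uv by (smt (verit) mult_left_le)
    finally have "(s, s *\<^sub>R g z w) \<in> G z"
      using \<open>s \<ge> 0\<close> uv mem_G_iff[OF z] by auto
    moreover have "s *\<^sub>R g z w = g z ((u * s1) *\<^sub>R w1 + (v * s2) *\<^sub>R w2)"
      by (simp add: sw[symmetric] blinfun.scaleR_right)
    ultimately show ?thesis
      using comb by simp
  qed
qed

lemma time_scale_norm_bounded: "\<exists>C. \<forall>z\<in>S. \<forall>w. time_scale z w * norm w \<le> C"
proof -
  obtain R where R: "\<And>z u. z \<in> S \<Longrightarrow> R \<le> norm u \<Longrightarrow> norm u \<le> L z u"
    using L_superlinear[of 1] by auto
  have "time_scale z w * norm w \<le> max 1 (R / \<beta>)" if z: "z \<in> S" for z w
  proof (cases "R \<le> norm w")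
    case True
    then have "norm w \<le> L z w + \<beta>"
      using R[OF z] beta_pos by fastforce
    then have "time_scale z w * norm w \<le> 1"
      using L_beta_pos[OF z] by (simp add: time_scale_def field_simps)
    then show ?thesis
      by linarith
  next
    case False
    have "time_scale z w * norm w \<le> inverse \<beta> * R"
      using False time_scale_le[OF z] time_scale_pos[OF z] beta_pos
      by (intro mult_mono) auto
    then show ?thesis
      by (simp add: field_simps)
  qed
  then show ?thesis by blast
qed

lemma le_time_scale:
  assumes "z \<in> S" "s * (L z w + \<beta>) \<le> 1"
  shows "s \<le> time_scale z w"
  using assms L_beta_pos[OF assms(1), of w] by (simp add: time_scale_def field_simps)

lemma bounded_G:
  assumes z: "z \<in> S"
  shows "bounded (G z)"
proof -
  obtain C where C: "\<And>w. time_scale z w * norm w \<le> C"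
    using time_scale_norm_bounded z by blast
  have "c_g \<ge> 0"
    using g_bound[OF z] norm_ge_zero order_trans by blast
  have "norm P \<le> inverse \<beta> + c_g * C" if "P \<in> G z" for P
  proof -
    obtain w s where s: "0 \<le> s" "s * (L z w + \<beta>) \<le> 1" and P: "P = (s, s *\<^sub>R g z w)"
      using \<open>P \<in> G z\<close> mem_G_iff[OF z] by blast
    have "s \<le> time_scale z w"
      using le_time_scale[OF z s(2)] .
    have "norm (s *\<^sub>R g z w) \<le> s * (norm (g z) * norm w)"
      using s(1) norm_blinfun[of "g z" w] by (simp add: mult_left_mono)
    also have "\<dots> = norm (g z) * (s * norm w)"
      by simp
    also have "\<dots> \<le> c_g * (time_scale z w * norm w)"
      using s(1) \<open>s \<le> time_scale z w\<close> g_bound[OF z] \<open>c_g \<ge> 0\<close>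
      by (intro mult_mono mult_right_mono) auto
    also have "\<dots> \<le> c_g * C"
      using C \<open>c_g \<ge> 0\<close> by (intro mult_left_mono)
    finally show ?thesis
      using P s(1) \<open>s \<le> time_scale z w\<close> time_scale_le[OF z, of w] norm_Pair_le[of s "s *\<^sub>R g z w"]
      by simp
  qed
  then show ?thesis
    unfolding bounded_iff by blast
qed

lemma scaled_norm_tendsto_zero:
  assumes z: "z \<in> S" and s: "\<And>n. 0 \<le> s n" "\<And>n. s n * (L z (w n) + \<beta>) \<le> 1"
    and "s \<longlonglongrightarrow> 0"
  shows "(\<lambda>n. s n * norm (w n)) \<longlonglongrightarrow> 0"
proof (rule order_tendstoI)
  fix a :: real
  assume "a < 0"
  then show "eventually (\<lambda>n. a < s n * norm (w n)) sequentially"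
    using s(1) by (intro always_eventually allI) (smt (verit) mult_nonneg_nonneg norm_ge_zero)
next
  fix a :: real
  assume "0 < a"
  obtain R where R: "\<And>u. R \<le> norm u \<Longrightarrow> norm u \<le> a / 2 * L z u"
    using L_superlinear[of "a / 2"] \<open>0 < a\<close> z by auto
  define R' where "R' = max R 1"
  have "R' > 0"
    unfolding R'_def by simp
  have "eventually (\<lambda>n. s n < a / (2 * R')) sequentially"
    using \<open>s \<longlonglongrightarrow> 0\<close> \<open>0 < a\<close> \<open>R' > 0\<close> by (intro order_tendstoD(2)) auto
  then show "eventually (\<lambda>n. s n * norm (w n) < a) sequentially"
  proof (rule eventually_mono)
    fix n
    assume sn: "s n < a / (2 * R')"
    show "s n * norm (w n) < a"
    proof (cases "R \<le> norm (w n)")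
      case True
      have "a / 2 * L z (w n) \<le> a / 2 * (L z (w n) + \<beta>)"
        using \<open>0 < a\<close> beta_pos by simp
      then have "norm (w n) \<le> a / 2 * (L z (w n) + \<beta>)"
        using R[OF True] by linarith
      then have "s n * norm (w n) \<le> a / 2 * (s n * (L z (w n) + \<beta>))"
        using s(1) by (metis mult.left_commute mult_left_mono)
      also have "\<dots> \<le> a / 2"
        using s(2) \<open>0 < a\<close> by (simp add: mult_left_le)
      finally show ?thesis
        using \<open>0 < a\<close> by simp
    next
      case False
      then have "s n * norm (w n) \<le> s n * R'"
        using s(1) unfolding R'_def by (intro mult_left_mono) auto
      also have "\<dots> < a"
        using sn \<open>R' > 0\<close> \<open>0 < a\<close> by (simp add: field_simps)
      finally show ?thesis .
    qed
  qed
qed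

lemma tendsto_mem_G_of_bounded:
  assumes z: "z \<in> S" and s: "\<And>n. 0 \<le> s n" "\<And>n. s n * (L z (w n) + \<beta>) \<le> 1"
    and W: "\<And>n. norm (w n) \<le> W"
    and "s \<longlonglongrightarrow> s0" and "(\<lambda>n. s n *\<^sub>R g z (w n)) \<longlonglongrightarrow> y"
  shows "(s0, y) \<in> G z"
proof -
  obtain w0 r where r: "strict_mono r" and "(w \<circ> r) \<longlonglongrightarrow> w0"
    using compact_imp_seq_compact[OF compact_cball[of 0 W]] W
    unfolding seq_compact_def by (metis mem_cball_0)
  then have wr: "(\<lambda>k. w (r k)) \<longlonglongrightarrow> w0"
    by (simp add: o_def)
  have sr: "(\<lambda>k. s (r k)) \<longlonglongrightarrow> s0"
    using LIMSEQ_subseq_LIMSEQ[OF \<open>s \<longlonglongrightarrow> s0\<close> r] by (simp add: o_def)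
  have "continuous_on UNIV (L z)"
    by (rule convex_on_continuous[OF open_UNIV L_convex[OF z]])
  then have "(\<lambda>k. L z (w (r k))) \<longlonglongrightarrow> L z w0"
    by (rule continuous_on_tendsto_compose[OF _ wr]) auto
  then have "(\<lambda>k. s (r k) * (L z (w (r k)) + \<beta>)) \<longlonglongrightarrow> s0 * (L z w0 + \<beta>)"
    by (intro tendsto_intros sr)
  then have "s0 * (L z w0 + \<beta>) \<le> 1"
    using s(2) by (simp add: LIMSEQ_le_const2)
  have "(\<lambda>k. s (r k) *\<^sub>R g z (w (r k))) \<longlonglongrightarrow> s0 *\<^sub>R g z w0"
    by (intro tendsto_scaleR sr blinfun.tendsto[OF tendsto_const wr])
  moreover have "(\<lambda>k. s (r k) *\<^sub>R g z (w (r k))) \<longlonglongrightarrow> y"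
    using LIMSEQ_subseq_LIMSEQ[OF \<open>(\<lambda>n. s n *\<^sub>R g z (w n)) \<longlonglongrightarrow> y\<close> r] by (simp add: o_def)
  ultimately have "y = s0 *\<^sub>R g z w0"
    using LIMSEQ_unique by blast
  moreover have "0 \<le> s0"
    using \<open>s \<longlonglongrightarrow> s0\<close> s(1) by (simp add: LIMSEQ_le_const)
  ultimately show ?thesis
    using \<open>s0 * (L z w0 + \<beta>) \<le> 1\<close> mem_G_iff[OF z] by blast
qed

lemma scaled_g_tendsto_zero:
  assumes z: "z \<in> S" and s: "\<And>n. 0 \<le> s n" "\<And>n. s n * (L z (w n) + \<beta>) \<le> 1"
    and "s \<longlonglongrightarrow> 0"
  shows "(\<lambda>n. s n *\<^sub>R g z (w n)) \<longlonglongrightarrow> 0"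
proof -
  have bound: "norm (s n *\<^sub>R g z (w n)) \<le> c_g * (s n * norm (w n))" for n
  proof -
    have "norm (s n *\<^sub>R g z (w n)) \<le> s n * (norm (g z) * norm (w n))"
      using s(1) norm_blinfun[of "g z" "w n"] by (simp add: mult_left_mono)
    also have "\<dots> = norm (g z) * (s n * norm (w n))"
      by simp
    also have "\<dots> \<le> c_g * (s n * norm (w n))"
      using g_bound[OF z] s(1) by (simp add: mult_right_mono)
    finally show ?thesis .
  qed
  have "(\<lambda>n. c_g * (s n * norm (w n))) \<longlonglongrightarrow> 0"
    using tendsto_mult_right_zero[OF scaled_norm_tendsto_zero[OF z s \<open>s \<longlonglongrightarrow> 0\<close>]] .
  then show ?thesis
    by (rule Lim_null_comparison[OF always_eventually[OF allI[OF bound]]])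
qed

lemma tendsto_mem_G:
  assumes z: "z \<in> S" and s: "\<And>n. 0 \<le> s n" "\<And>n. s n * (L z (w n) + \<beta>) \<le> 1"
    and slim: "s \<longlonglongrightarrow> s0" and ylim: "(\<lambda>n. s n *\<^sub>R g z (w n)) \<longlonglongrightarrow> y"
  shows "(s0, y) \<in> G z"
proof (cases "s0 = 0")
  case True
  then show ?thesis
    using LIMSEQ_unique[OF ylim scaled_g_tendsto_zero[OF z s]] slim zero_mem_G[OF z] by simp
next
  case False
  have "0 \<le> s0"
    using slim s(1) by (simp add: LIMSEQ_le_const)
  obtain C where C: "\<And>w. time_scale z w * norm w \<le> C"
    using time_scale_norm_bounded z by blast
  obtain N where N: "\<And>n. N \<le> n \<Longrightarrow> s0 / 2 < s n"
    using order_tendstoD(1)[OF slim, of "s0 / 2"] False \<open>0 \<le> s0\<close>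
    by (auto simp: eventually_sequentially)
  have "norm (w n) \<le> 2 * C / s0" if "N \<le> n" for n
  proof -
    have "s0 / 2 * norm (w n) \<le> s n * norm (w n)"
      using N[OF that] by (intro mult_right_mono) auto
    also have "\<dots> \<le> time_scale z (w n) * norm (w n)"
      by (rule mult_right_mono[OF le_time_scale[OF z s(2)] norm_ge_zero])
    also have "\<dots> \<le> C"
      by (rule C)
    finally show ?thesis
      using False \<open>0 \<le> s0\<close> by (simp add: field_simps)
  qed
  then show ?thesis
    using LIMSEQ_ignore_initial_segment[OF slim, of N] LIMSEQ_ignore_initial_segment[OF ylim, of N] s
    by (intro tendsto_mem_G_of_bounded[OF z, of "\<lambda>n. s (n + N)" "\<lambda>n. w (n + N)" "2 * C / s0"]) simp_all
qed

lemma closed_G: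
  assumes z: "z \<in> S"
  shows "closed (G z)"
  unfolding closed_sequential_limits
proof (intro allI impI, elim conjE)
  fix P :: "nat \<Rightarrow> real \<times> 'v" and l
  assume "\<forall>n. P n \<in> G z" and "P \<longlonglongrightarrow> l"
  then have "\<forall>n. \<exists>w s. 0 \<le> s \<and> s * (L z w + \<beta>) \<le> 1 \<and> P n = (s, s *\<^sub>R g z w)"
    using mem_G_iff[OF z] by blast
  then have "\<exists>w. \<forall>n. \<exists>s. 0 \<le> s \<and> s * (L z (w n) + \<beta>) \<le> 1 \<and> P n = (s, s *\<^sub>R g z (w n))"
    by (rule choice)
  then obtain w where "\<forall>n. \<exists>s. 0 \<le> s \<and> s * (L z (w n) + \<beta>) \<le> 1 \<and> P n = (s, s *\<^sub>R g z (w n))" ..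
  then have "\<exists>s. \<forall>n. 0 \<le> s n \<and> s n * (L z (w n) + \<beta>) \<le> 1 \<and> P n = (s n, s n *\<^sub>R g z (w n))"
    by (rule choice)
  then obtain s where s: "\<And>n. 0 \<le> s n" "\<And>n. s n * (L z (w n) + \<beta>) \<le> 1"
    and P: "\<And>n. P n = (s n, s n *\<^sub>R g z (w n))"
    by blast
  show "l \<in> G z"
    using tendsto_fst[OF \<open>P \<longlonglongrightarrow> l\<close>] tendsto_snd[OF \<open>P \<longlonglongrightarrow> l\<close>]
    by (cases l) (auto simp: P intro: tendsto_mem_G[OF z s])
qed

lemma compact_G: "z \<in> S \<Longrightarrow> compact (G z)"
  using bounded_G closed_G compact_eq_bounded_closed by blast

lemma c_dg_nonneg: "z \<in> S \<Longrightarrow> 0 \<le> c_dg"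
  using Dg_bound onorm_pos_le[OF has_derivative_bounded_linear[OF g_deriv]] order_trans by blast

lemma g_lipschitz:
  assumes "p \<in> S" "q \<in> S"
  shows "norm (g p - g q) \<le> c_dg * dist p q"
  using differentiable_bound[OF convex_S g_deriv Dg_bound assms] by (simp add: dist_norm)

lemma time_scale_g_diff_le:
  assumes C: "\<And>z w. z \<in> S \<Longrightarrow> time_scale z w * norm w \<le> C" and p: "p \<in> S" and q: "q \<in> S"
  shows "time_scale p w * norm (g p w - g q w) \<le> c_dg * C * dist p q"
proof -
  have "time_scale p w * norm (g p w - g q w) \<le> time_scale p w * (norm (g p - g q) * norm w)"
    using time_scale_pos[OF p] norm_blinfun[of "g p - g q" w]
    by (simp add: blinfun.diff_left mult_left_mono)
  also have "\<dots> = norm (g p - g q) * (time_scale p w * norm w)"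
    by simp
  also have "\<dots> \<le> (c_dg * dist p q) * C"
    using g_lipschitz[OF p q] C[OF p] time_scale_pos[OF p] c_dg_nonneg[OF p]
    by (intro mult_mono) (simp_all add: less_imp_le)
  finally show ?thesis
    by (simp add: ac_simps)
qed

lemma V_has_derivative:
  assumes z: "z \<in> S"
  shows "((\<lambda>z. V z w) has_derivative
           (\<lambda>h. time_scale z w *\<^sub>R Dg z h w - (time_scale z w * DL z w h * time_scale z w) *\<^sub>R g z w))
           (at z within S)"
proof -
  have dT: "((\<lambda>z. time_scale z w) has_derivative
      (\<lambda>h. - (time_scale z w * DL z w h * time_scale z w))) (at z within S)"
    unfolding time_scale_def
    by (rule Deriv.has_derivative_inverse[OF _ has_derivative_add_const[OF L_deriv[OF z]]])
      (use L_beta_pos[OF z, of w] in simp)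
  have dg: "((\<lambda>z. g z w) has_derivative (\<lambda>h. Dg z h w)) (at z within S)"
    using blinfun.FDERIV[OF g_deriv[OF z] has_derivative_const[of w]] by simp
  show ?thesis
    unfolding V_def using has_derivative_scaleR[OF dT dg] by simp
qed

lemma norm_V_derivative_le:
  assumes C: "\<And>z w. z \<in> S \<Longrightarrow> time_scale z w * norm w \<le> C" and z: "z \<in> S"
  shows "norm (time_scale z w *\<^sub>R Dg z h w - (time_scale z w * DL z w h * time_scale z w) *\<^sub>R g z w)
           \<le> (c_dg * C + \<kappa> / \<beta>) * norm h"
proof -
  define T where "T = time_scale z w"
  have "L z w + \<beta> > 0"
    by (rule L_beta_pos[OF z])
  then have "T > 0" and T_inv: "T * (L z w + \<beta>) = 1"
    by (simp_all add: T_def time_scale_def)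
  have "norm (T *\<^sub>R Dg z h w) \<le> T * (onorm (Dg z) * norm h * norm w)"
    using \<open>T > 0\<close> norm_blinfun[of "Dg z h" w] onorm[OF has_derivative_bounded_linear[OF g_deriv[OF z]], of h]
    by (simp add: mult_left_mono mult_right_mono order_trans)
  also have "\<dots> = onorm (Dg z) * norm h * (T * norm w)"
    by simp
  also have "\<dots> \<le> c_dg * norm h * C"
    using Dg_bound[OF z] C[OF z, of w] c_dg_nonneg[OF z] \<open>T > 0\<close>
    by (intro mult_mono) (auto simp: T_def)
  finally have first: "norm (T *\<^sub>R Dg z h w) \<le> c_dg * C * norm h"
    by (simp add: ac_simps)
  have "norm ((T * DL z w h * T) *\<^sub>R g z w) = T * T * (norm (DL z w h) * norm (g z w))"
    using \<open>T > 0\<close> by (simp add: abs_mult)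
  also have "\<dots> \<le> T * T * (onorm (DL z w) * norm h * norm (g z w))"
    using \<open>T > 0\<close> onorm[OF has_derivative_bounded_linear[OF L_deriv[OF z, of w]], of h]
    by (intro mult_left_mono mult_right_mono) auto
  also have "\<dots> = T * T * (onorm (DL z w) * norm (g z w) * norm h)"
    by (simp add: ac_simps)
  also have "\<dots> \<le> T * T * (\<kappa> * (L z w + \<beta>) * norm h)"
    using \<open>T > 0\<close> DL_g_bound[OF z, of w] by (intro mult_left_mono mult_right_mono) auto
  also have "\<dots> = (T * (L z w + \<beta>)) * T * \<kappa> * norm h"
    by (simp add: ac_simps)
  also have "\<dots> = T * \<kappa> * norm h"
    unfolding T_inv by simp
  also have "\<dots> \<le> \<kappa> / \<beta> * norm h"
    using time_scale_le[OF z, of w] kappa_nonneg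
    by (intro mult_right_mono) (auto simp: T_def divide_inverse mult.commute mult_left_mono)
  finally have second: "norm ((T * DL z w h * T) *\<^sub>R g z w) \<le> \<kappa> / \<beta> * norm h" .
  show ?thesis
    using norm_triangle_le_diff[OF add_mono[OF first second]] by (simp add: T_def algebra_simps)
qed

lemma V_lipschitz:
  assumes C: "\<And>z w. z \<in> S \<Longrightarrow> time_scale z w * norm w \<le> C" and p: "p \<in> S" and q: "q \<in> S"
  shows "norm (V p w - V q w) \<le> (c_dg * C + \<kappa> / \<beta>) * dist p q"
proof -
  have "0 \<le> c_dg * C + \<kappa> / \<beta>"
    using C[OF p, of 0] c_dg_nonneg[OF p] kappa_nonneg beta_pos by simp
  then have "norm (V p w - V q w) \<le> (c_dg * C + \<kappa> / \<beta>) * norm (p - q)"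
    by (intro differentiable_bound[OF convex_S V_has_derivative _ p q] onorm_bound
        norm_V_derivative_le[OF C])
  then show ?thesis
    by (simp add: dist_norm)
qed

lemma time_scale_lipschitz_on:
  assumes "convex \<Omega>" "\<Omega> \<subseteq> S" and M: "\<And>z. z \<in> \<Omega> \<Longrightarrow> onorm (DL z w) \<le> M"
    and p: "p \<in> \<Omega>" and q: "q \<in> \<Omega>"
  shows "\<bar>time_scale p w - time_scale q w\<bar> \<le> M / \<beta>\<^sup>2 * dist p q"
proof -
  have pS: "p \<in> S" and qS: "q \<in> S"
    using assms by auto
  have L_diff: "\<bar>L q w - L p w\<bar> \<le> M * dist p q"
    using differentiable_bound[OF \<open>convex \<Omega>\<close> has_derivative_subset[OF L_deriv] M q p] assms
    by (auto simp: dist_norm norm_minus_commute)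
  have "time_scale p w - time_scale q w = time_scale p w * time_scale q w * (L q w - L p w)"
    using L_beta_pos[OF pS, of w] L_beta_pos[OF qS, of w] by (simp add: time_scale_def field_simps)
  then have "\<bar>time_scale p w - time_scale q w\<bar> = time_scale p w * time_scale q w * \<bar>L q w - L p w\<bar>"
    using time_scale_pos[OF pS] time_scale_pos[OF qS] by (simp add: abs_mult abs_of_pos)
  also have "\<dots> \<le> inverse \<beta> * inverse \<beta> * (M * dist p q)"
    using time_scale_le[OF pS] time_scale_le[OF qS] time_scale_pos[OF pS] time_scale_pos[OF qS]
      L_diff beta_pos
    by (intro mult_mono) (simp_all add: less_imp_le)
  finally show ?thesis
    by (simp add: power2_eq_square divide_inverse ac_simps)
qed

lemma dist_G_le:
  assumes "q \<in> S" "\<rho> \<in> {0..1}"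
  shows "\<exists>Q\<in>G q. dist (\<rho> *\<^sub>R (time_scale p w, V p w)) Q
                   \<le> \<bar>time_scale p w - time_scale q w\<bar> + norm (V p w - V q w)"
proof
  show "\<rho> *\<^sub>R (time_scale q w, V q w) \<in> G q"
    unfolding G_eq using assms(2) by blast
  have "dist (\<rho> *\<^sub>R (time_scale p w, V p w)) (\<rho> *\<^sub>R (time_scale q w, V q w))
      \<le> dist (time_scale p w, V p w) (time_scale q w, V q w)"
    using assms(2) by (intro dist_scaleR_le) auto
  also have "\<dots> = norm (time_scale p w - time_scale q w, V p w - V q w)"
    by (simp add: dist_norm)
  also have "\<dots> \<le> \<bar>time_scale p w - time_scale q w\<bar> + norm (V p w - V q w)"
    using norm_Pair_le[of "time_scale p w - time_scale q w" "V p w - V q w"] by simp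
  finally show "dist (\<rho> *\<^sub>R (time_scale p w, V p w)) (\<rho> *\<^sub>R (time_scale q w, V q w))
      \<le> \<bar>time_scale p w - time_scale q w\<bar> + norm (V p w - V q w)" .
qed

lemma dist_G_le_if_time_scale_le:
  assumes p: "p \<in> S" and q: "q \<in> S" and \<rho>: "\<rho> \<in> {0..1}"
    and le: "time_scale p w \<le> time_scale q w"
  shows "\<exists>Q\<in>G q. dist (\<rho> *\<^sub>R (time_scale p w, V p w)) Q \<le> time_scale p w * norm (g p w - g q w)"
proof
  define s where "s = \<rho> * time_scale p w"
  have "0 \<le> s" "s \<le> time_scale q w"
    using \<rho> le time_scale_pos[OF p, where u=w] unfolding s_def
    by (auto intro: order_trans[OF mult_left_le_one_le])
  then have "s * (L q w + \<beta>) \<le> 1"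
    using L_beta_pos[OF q, of w] by (simp add: time_scale_def field_simps)
  with \<open>0 \<le> s\<close> show "(s, s *\<^sub>R g q w) \<in> G q"
    using mem_G_iff[OF q] by blast
  have "dist (\<rho> *\<^sub>R (time_scale p w, V p w)) (s, s *\<^sub>R g q w) = s * norm (g p w - g q w)"
    using \<open>0 \<le> s\<close> by (simp add: s_def V_def dist_norm flip: scaleR_diff_right)
  also have "\<dots> \<le> time_scale p w * norm (g p w - g q w)"
    using \<rho> time_scale_pos[OF p, where u=w] unfolding s_def
    by (simp add: mult_left_le_one_le mult_right_le_one_le)
  finally show "dist (\<rho> *\<^sub>R (time_scale p w, V p w)) (s, s *\<^sub>R g q w)
      \<le> time_scale p w * norm (g p w - g q w)" .
qed

lemma dist_G_le_if_time_scale_between: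
  assumes p: "p \<in> S" and q: "q \<in> S" and \<rho>: "\<rho> \<in> {0..1}"
    and lt: "time_scale q w < time_scale p w" and le: "2 * time_scale p w \<le> time_scale q 0"
  shows "\<exists>Q\<in>G q. dist (\<rho> *\<^sub>R (time_scale p w, V p w)) Q
                   \<le> 2 * norm (V p w - V q w) + time_scale p w * norm (g p w - g q w)"
proof
  define T a b where "T = time_scale p w" and "a = time_scale q w" and "b = time_scale q 0"
  have "0 < a" "a < T" "2 * T \<le> b"
    using time_scale_pos[OF q] lt le by (simp_all add: T_def a_def b_def)
  \<comment> \<open>Mixing in the point \<open>(b, 0)\<close> of \<open>G q\<close> lifts the first coordinate to \<open>T\<close> while only
    shrinking the second one.\<close>
  define \<mu> where "\<mu> = (b - T) / (b - a)"
  have \<mu>: "0 \<le> \<mu>" "\<mu> \<le> 1" "1 - \<mu> = (T - a) / (b - a)" "\<mu> * (b - a) = b - T"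
    using \<open>0 < a\<close> \<open>a < T\<close> \<open>2 * T \<le> b\<close> by (auto simp: \<mu>_def field_simps)
  then have "\<mu> * a + (1 - \<mu>) * b = T"
    by (simp add: algebra_simps)
  have "(a, V q w) \<in> G q" "(b, 0) \<in> G q"
    using vertex_mem_G[of q w] vertex_mem_G[of q 0] by (simp_all add: a_def b_def V_def)
  then have X: "\<mu> *\<^sub>R (a, V q w) + (1 - \<mu>) *\<^sub>R (b, 0) \<in> G q"
    using \<mu>(1,2) by (intro convexD[OF convex_G[OF q]]) auto
  have "\<rho> *\<^sub>R (\<mu> *\<^sub>R (a, V q w) + (1 - \<mu>) *\<^sub>R (b, 0)) + (1 - \<rho>) *\<^sub>R (0, 0) \<in> G q"
    using \<rho> by (intro convexD[OF convex_G[OF q] X zero_mem_G[OF q]]) auto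
  then show "\<rho> *\<^sub>R (\<mu> *\<^sub>R (a, V q w) + (1 - \<mu>) *\<^sub>R (b, 0)) \<in> G q"
    by simp
  have "(T - a) * norm (g q w) = norm (T *\<^sub>R g q w - a *\<^sub>R g q w)"
    using \<open>a < T\<close> by (simp flip: scaleR_diff_left)
  also have "\<dots> \<le> norm (T *\<^sub>R g q w - T *\<^sub>R g p w) + norm (V p w - V q w)"
    using norm_diff_triangle_le[of "T *\<^sub>R g q w" "T *\<^sub>R g p w" _ "a *\<^sub>R g q w"]
    by (simp add: V_def T_def a_def)
  also have "\<dots> = T * norm (g p w - g q w) + norm (V p w - V q w)"
    using \<open>0 < a\<close> \<open>a < T\<close> by (simp add: norm_minus_commute flip: scaleR_diff_right)
  finally have gap: "(T - a) * norm (g q w) \<le> T * norm (g p w - g q w) + norm (V p w - V q w)" .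
  have "(1 - \<mu>) * norm (V q w) = (T - a) * norm (g q w) * (a / (b - a))"
    using \<mu>(3) \<open>0 < a\<close> by (simp add: V_def a_def)
  also have "\<dots> \<le> (T - a) * norm (g q w)"
  proof (rule mult_left_le)
    show "a / (b - a) \<le> 1"
      using \<open>0 < a\<close> \<open>a < T\<close> \<open>2 * T \<le> b\<close> by (simp add: field_simps)
    show "0 \<le> (T - a) * norm (g q w)"
      using \<open>a < T\<close> by simp
  qed
  finally have tail: "(1 - \<mu>) * norm (V q w) \<le> T * norm (g p w - g q w) + norm (V p w - V q w)"
    using gap by linarith
  have "dist (\<rho> *\<^sub>R (T, V p w)) (\<rho> *\<^sub>R (\<mu> *\<^sub>R (a, V q w) + (1 - \<mu>) *\<^sub>R (b, 0)))
      \<le> dist (T, V p w) (\<mu> *\<^sub>R (a, V q w) + (1 - \<mu>) *\<^sub>R (b, 0))"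
    using \<rho> by (intro dist_scaleR_le) auto
  also have "\<dots> = norm ((V p w - V q w) + (1 - \<mu>) *\<^sub>R V q w)"
    using \<open>\<mu> * a + (1 - \<mu>) * b = T\<close> by (simp add: dist_norm algebra_simps)
  also have "\<dots> \<le> norm (V p w - V q w) + (1 - \<mu>) * norm (V q w)"
    using norm_triangle_ineq[of "V p w - V q w" "(1 - \<mu>) *\<^sub>R V q w"] \<mu>(2) by simp
  finally show "dist (\<rho> *\<^sub>R (time_scale p w, V p w)) (\<rho> *\<^sub>R (\<mu> *\<^sub>R (a, V q w) + (1 - \<mu>) *\<^sub>R (b, 0)))
      \<le> 2 * norm (V p w - V q w) + time_scale p w * norm (g p w - g q w)"
    using tail by (simp add: T_def)
qed

lemma norm_le_if_time_scale_large:
  assumes C: "\<And>z w. z \<in> S \<Longrightarrow> time_scale z w * norm w \<le> C" and p: "p \<in> S" and q: "q \<in> S"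
    and large: "time_scale q 0 < 2 * time_scale p w"
  shows "norm w \<le> 2 * C * (L q 0 + \<beta>)"
proof -
  have "L p w + \<beta> < 2 * (L q 0 + \<beta>)"
    using large L_beta_pos[OF p, of w] L_beta_pos[OF q, of 0]
    by (simp add: time_scale_def field_simps)
  have "norm w = time_scale p w * norm w * (L p w + \<beta>)"
    using L_beta_pos[OF p, of w] by (simp add: time_scale_def)
  also have "\<dots> \<le> C * (L p w + \<beta>)"
    using C[OF p, of w] L_beta_pos[OF p, of w] by (simp add: mult_right_mono)
  also have "\<dots> \<le> C * (2 * (L q 0 + \<beta>))"
    using C[OF p, of 0] \<open>L p w + \<beta> < 2 * (L q 0 + \<beta>)\<close> by (intro mult_left_mono) auto
  finally show ?thesis
    by (simp add: algebra_simps)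
qed

lemma infdist_G_le:
  assumes \<Omega>: "convex \<Omega>" "\<Omega> \<subseteq> S"
    and C: "\<And>z w. z \<in> S \<Longrightarrow> time_scale z w * norm w \<le> C"
    and M0: "\<And>z. z \<in> \<Omega> \<Longrightarrow> L z 0 \<le> M0"
    and M: "\<And>z u. z \<in> \<Omega> \<Longrightarrow> norm u \<le> 2 * C * (M0 + \<beta>) \<Longrightarrow> onorm (DL z u) \<le> M" and "0 \<le> M"
    and p: "p \<in> \<Omega>" and q: "q \<in> \<Omega>" and P: "P \<in> G p"
  shows "infdist P (G q) \<le> (3 * c_dg * C + 2 * \<kappa> / \<beta> + M / \<beta>\<^sup>2) * dist p q"
proof -
  have pS: "p \<in> S" and qS: "q \<in> S"
    using \<Omega> p q by auto
  obtain w \<rho> where \<rho>: "\<rho> \<in> {0..1}" and P_eq: "P = \<rho> *\<^sub>R (time_scale p w, V p w)"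
    using P unfolding G_eq by blast
  define d where "d = dist p q"
  have V_diff: "norm (V p w - V q w) \<le> c_dg * C * d + \<kappa> / \<beta> * d"
    using V_lipschitz[OF C pS qS, of w] by (simp add: d_def algebra_simps)
  have g_diff: "time_scale p w * norm (g p w - g q w) \<le> c_dg * C * d"
    using time_scale_g_diff_le[OF C pS qS] by (simp add: d_def)
  have "0 \<le> C"
    using C[OF pS, of 0] by simp
  then have nonneg: "0 \<le> c_dg * C * d" "0 \<le> \<kappa> / \<beta> * d" "0 \<le> M / \<beta>\<^sup>2 * d"
    using c_dg_nonneg[OF pS] kappa_nonneg beta_pos \<open>0 \<le> M\<close> by (simp_all add: d_def)
  have K: "(3 * c_dg * C + 2 * \<kappa> / \<beta> + M / \<beta>\<^sup>2) * d = 3 * (c_dg * C * d) + 2 * (\<kappa> / \<beta> * d) + M / \<beta>\<^sup>2 * d"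
    by (simp add: algebra_simps)
  obtain Q where "Q \<in> G q" and "dist P Q \<le> (3 * c_dg * C + 2 * \<kappa> / \<beta> + M / \<beta>\<^sup>2) * d"
  proof (cases "time_scale p w \<le> time_scale q w")
    case True
    then obtain Q where "Q \<in> G q" "dist P Q \<le> time_scale p w * norm (g p w - g q w)"
      using dist_G_le_if_time_scale_le[OF pS qS \<rho>] unfolding P_eq by blast
    moreover have "time_scale p w * norm (g p w - g q w) \<le> (3 * c_dg * C + 2 * \<kappa> / \<beta> + M / \<beta>\<^sup>2) * d"
      using g_diff nonneg unfolding K by linarith
    ultimately show thesis
      using that by fastforce
  next
    case False
    then have lt: "time_scale q w < time_scale p w"
      by simp
    show thesis
    proof (cases "2 * time_scale p w \<le> time_scale q 0")
      case True
      then obtain Q where "Q \<in> G q"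
        and "dist P Q \<le> 2 * norm (V p w - V q w) + time_scale p w * norm (g p w - g q w)"
        using dist_G_le_if_time_scale_between[OF pS qS \<rho> lt] unfolding P_eq by blast
      moreover have "2 * norm (V p w - V q w) + time_scale p w * norm (g p w - g q w)
          \<le> (3 * c_dg * C + 2 * \<kappa> / \<beta> + M / \<beta>\<^sup>2) * d"
        using V_diff g_diff nonneg unfolding K by linarith
      ultimately show thesis
        using that by fastforce
    next
      case False
      then have "norm w \<le> 2 * C * (M0 + \<beta>)"
        using norm_le_if_time_scale_large[OF C pS qS] M0[OF q] \<open>0 \<le> C\<close>
        by (smt (verit) mult_left_mono)
      then have "\<bar>time_scale p w - time_scale q w\<bar> \<le> M / \<beta>\<^sup>2 * d"
        using time_scale_lipschitz_on[OF \<Omega> M p q] by (simp add: d_def)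
      moreover obtain Q where "Q \<in> G q"
        and "dist P Q \<le> \<bar>time_scale p w - time_scale q w\<bar> + norm (V p w - V q w)"
        using dist_G_le[OF qS \<rho>] unfolding P_eq by blast
      ultimately show thesis
        using that V_diff nonneg unfolding K by fastforce
    qed
  qed
  then show ?thesis
    unfolding d_def using infdist_le2 by blast
qed

lemma G_lipschitz_on:
  assumes \<Omega>: "compact \<Omega>" "convex \<Omega>" "\<Omega> \<subseteq> S"
    and DL_bounded: "\<And>W. \<exists>M. \<forall>z\<in>\<Omega>. \<forall>u. norm u \<le> W \<longrightarrow> onorm (DL z u) \<le> M"
  shows "\<exists>K. \<forall>p\<in>\<Omega>. \<forall>q\<in>\<Omega>. hausdorff_dist (G p) (G q) \<le> K * dist p q"
proof -
  obtain C where C: "\<And>z w. z \<in> S \<Longrightarrow> time_scale z w * norm w \<le> C"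
    using time_scale_norm_bounded by blast
  have "continuous_on S (\<lambda>z. L z 0)"
    using L_deriv has_derivative_continuous continuous_on_eq_continuous_within by blast
  then obtain M0 where M0: "\<And>z. z \<in> \<Omega> \<Longrightarrow> L z 0 \<le> M0"
    using continuous_on_compact_bound[OF \<Omega>(1) continuous_on_subset[OF _ \<Omega>(3)]]
    by (metis real_norm_def abs_le_D1)
  obtain M where M: "\<And>z u. z \<in> \<Omega> \<Longrightarrow> norm u \<le> 2 * C * (M0 + \<beta>) \<Longrightarrow> onorm (DL z u) \<le> M"
    and "0 \<le> M"
  proof -
    obtain M where "\<forall>z\<in>\<Omega>. \<forall>u. norm u \<le> 2 * C * (M0 + \<beta>) \<longrightarrow> onorm (DL z u) \<le> M"
      using DL_bounded by blast
    then show thesis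
      using that[of "max M 0"] by fastforce
  qed
  define K where "K = 3 * c_dg * C + 2 * \<kappa> / \<beta> + M / \<beta>\<^sup>2"
  have "hausdorff_dist (G p) (G q) \<le> K * dist p q" if "p \<in> \<Omega>" "q \<in> \<Omega>" for p q
  proof (rule hausdorff_dist_le)
    show "G p \<noteq> {}" "G q \<noteq> {}"
      using zero_mem_G \<Omega>(3) that by blast+
    show "infdist P (G q) \<le> K * dist p q" if "P \<in> G p" for P
      unfolding K_def using infdist_G_le[OF \<Omega>(2,3) C M0 M \<open>0 \<le> M\<close> \<open>p \<in> \<Omega>\<close> \<open>q \<in> \<Omega>\<close> that]
      by simp
    show "infdist Q (G p) \<le> K * dist p q" if "Q \<in> G q" for Q
      unfolding K_def dist_commute[of p q]
      using infdist_G_le[OF \<Omega>(2,3) C M0 M \<open>0 \<le> M\<close> \<open>q \<in> \<Omega>\<close> \<open>p \<in> \<Omega>\<close> that]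
      by simp
  qed
  then show ?thesis
    by blast
qed

end

lemma has_derivative_partial_if_C1_on:
  fixes f :: "'a::real_normed_vector \<Rightarrow> 'b::real_normed_vector \<Rightarrow> 'c::real_normed_vector \<Rightarrow> real"
  assumes "C1_on (A \<times> UNIV \<times> UNIV) (\<lambda>(t, x, u). f t x u) f'" and "z \<in> A \<times> UNIV"
  shows "((\<lambda>z. f (fst z) (snd z) u) has_derivative (\<lambda>h. f' (fst z, snd z, u) (fst h, snd h, 0)))
           (at z within A \<times> UNIV)"
proof -
  have embed: "((\<lambda>z. (fst z, snd z, u)) has_derivative (\<lambda>h. (fst h, snd h, 0))) (at z within A \<times> UNIV)"
    by (auto intro!: derivative_eq_intros)
  have "((\<lambda>z. (\<lambda>(t, x, u). f t x u) (fst z, snd z, u)) has_derivative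
      (\<lambda>h. f' (fst z, snd z, u) (fst h, snd h, 0))) (at z within A \<times> UNIV)"
    by (rule has_derivative_in_compose2[OF _ _ assms(2) embed, where t="A \<times> UNIV \<times> UNIV"])
      (use assms(1) in \<open>auto simp: C1_on_def\<close>)
  then show ?thesis
    by simp
qed

lemma onorm_partial_bounded_if_C1_on:
  fixes f' :: "'a::real_normed_vector \<times> 'b::real_normed_vector \<times> 'c::euclidean_space \<Rightarrow> ('a \<times> 'b \<times> 'c) \<Rightarrow>\<^sub>L real"
  assumes "C1_on (A \<times> UNIV \<times> UNIV) f f'" and "compact K" "K \<subseteq> A \<times> UNIV"
  shows "\<exists>M. \<forall>z\<in>K. \<forall>u. norm u \<le> W \<longrightarrow> onorm (\<lambda>h. f' (fst z, snd z, u) (fst h, snd h, 0)) \<le> M"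
proof -
  let ?K = "(\<lambda>(z, u). (fst z, snd z, u)) ` (K \<times> cball (0::'c) W)"
  have "compact ?K"
    using assms(2) by (intro compact_continuous_image compact_Times compact_cball)
      (auto simp: case_prod_beta intro!: continuous_on_Pair continuous_on_fst continuous_on_snd)
  moreover have "?K \<subseteq> A \<times> UNIV"
    using assms(3) by (auto simp: mem_Times_iff)
  then have "continuous_on ?K f'"
    using assms(1) unfolding C1_on_def by (auto intro: continuous_on_subset)
  ultimately obtain M where "0 \<le> M" and M: "\<And>p. p \<in> ?K \<Longrightarrow> norm (f' p) \<le> M"
    using continuous_on_compact_bound by blast
  have "onorm (\<lambda>h. f' (fst z, snd z, u) (fst h, snd h, 0)) \<le> M"
    if "z \<in> K" "norm u \<le> W" for z u
  proof (rule onorm_bound[OF \<open>0 \<le> M\<close>])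
    fix h :: "'a \<times> 'b"
    have "norm (fst h, snd h, 0::'c) = norm h"
      by (cases h) (simp add: norm_Pair)
    then have "norm (f' (fst z, snd z, u) (fst h, snd h, 0)) \<le> norm (f' (fst z, snd z, u)) * norm h"
      using norm_blinfun[of "f' (fst z, snd z, u)" "(fst h, snd h, 0)"] by simp
    also have "\<dots> \<le> M * norm h"
      using that by (intro mult_right_mono M) (auto intro!: image_eqI[of _ _ "(z, u)"])
    finally show "norm (f' (fst z, snd z, u) (fst h, snd h, 0)) \<le> M * norm h" .
  qed
  then show ?thesis
    by blast
qed

lemma rescaled_dynamics_if_conditions:
  fixes L :: "real \<Rightarrow> 'x::real_normed_vector \<Rightarrow> 'u::euclidean_space \<Rightarrow> real"
    and L' :: "real \<times> 'x \<times> 'u \<Rightarrow> (real \<times> 'x \<times> 'u) \<Rightarrow>\<^sub>L real"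
    and g :: "real \<Rightarrow> 'x \<Rightarrow> ('u \<Rightarrow>\<^sub>L 'v::euclidean_space)"
    and g' :: "real \<times> 'x \<Rightarrow> (real \<times> 'x) \<Rightarrow>\<^sub>L ('u \<Rightarrow>\<^sub>L 'v)"
    and \<theta> :: "real \<Rightarrow> real"
  assumes L_C1: "C1_on ({0..1} \<times> UNIV \<times> UNIV) (\<lambda>(t, x, u). L t x u) L'"
    and g_C1: "C1_on ({0..1} \<times> UNIV) (\<lambda>(t, x). g t x) g'"
    and coercive: "\<And>t x u. t \<in> {0..1} \<Longrightarrow> L t x u \<ge> \<theta> (norm u) \<and> \<theta> (norm u) > 0"
    and superlinear: "((\<lambda>r. r / \<theta> r) \<longlongrightarrow> 0) at_top"
    and tangent: "\<And>t x u v. t \<in> {0..1} \<Longrightarrow> L t x u + L' (t, x, u) (0, 0, v - u) \<le> L t x v"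
    and growth: "\<And>t x u. t \<in> {0..1} \<Longrightarrow>
                   onorm (\<lambda>(s, y). L' (t, x, u) (s, y, 0)) * norm (g t x u) \<le> \<xi> * L t x u + \<delta>"
    and g_bounds: "\<And>t x. t \<in> {0..1} \<Longrightarrow> norm (g t x) \<le> c_g \<and> norm (g' (t, x)) \<le> c_dg"
    and "0 \<le> \<xi>" "0 < \<beta>"
  shows "rescaled_dynamics ({0..1} \<times> UNIV) (\<lambda>z. L (fst z) (snd z))
           (\<lambda>z u h. L' (fst z, snd z, u) (fst h, snd h, 0)) (\<lambda>z. g (fst z) (snd z))
           (\<lambda>z. blinfun_apply (g' z)) c_g c_dg (max \<xi> (\<delta> / \<beta>)) \<beta>"
proof
  show "convex ({0..1::real} \<times> (UNIV :: 'x set))"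
    by (intro convex_Times) auto
  fix z :: "real \<times> 'x" and u :: 'u
  assume z: "z \<in> {0..1} \<times> UNIV"
  then have t: "fst z \<in> {0..1}"
    by (auto simp: mem_Times_iff)
  show "0 \<le> L (fst z) (snd z) u"
    using coercive[OF t, where x="snd z" and u=u] by linarith
  show "((\<lambda>z. L (fst z) (snd z) u) has_derivative (\<lambda>h. L' (fst z, snd z, u) (fst h, snd h, 0)))
      (at z within {0..1} \<times> UNIV)"
    by (rule has_derivative_partial_if_C1_on[OF L_C1 z])
  have "onorm (\<lambda>h. L' (fst z, snd z, u) (fst h, snd h, 0)) * norm (g (fst z) (snd z) u)
      \<le> \<xi> * L (fst z) (snd z) u + \<delta>"
    using growth[OF t, where x="snd z" and u=u] unfolding split_beta' .
  also have "\<dots> \<le> max \<xi> (\<delta> / \<beta>) * L (fst z) (snd z) u + (\<delta> / \<beta>) * \<beta>"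
    using \<open>0 < \<beta>\<close> \<open>0 \<le> L (fst z) (snd z) u\<close> by (simp add: mult_right_mono)
  also have "\<dots> \<le> max \<xi> (\<delta> / \<beta>) * (L (fst z) (snd z) u + \<beta>)"
    using mult_right_mono[OF max.cobounded2[of "\<delta> / \<beta>" \<xi>], of \<beta>] \<open>0 < \<beta>\<close>
    by (simp add: distrib_left)
  finally show "onorm (\<lambda>h. L' (fst z, snd z, u) (fst h, snd h, 0)) * norm (g (fst z) (snd z) u)
      \<le> max \<xi> (\<delta> / \<beta>) * (L (fst z) (snd z) u + \<beta>)" .
  show "norm (g (fst z) (snd z)) \<le> c_g" and "onorm (blinfun_apply (g' z)) \<le> c_dg"
    using g_bounds[OF t, of "snd z"] by (simp_all add: norm_blinfun.rep_eq[symmetric])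
  have "((\<lambda>(t, x). g t x) has_derivative g' z) (at z within {0..1} \<times> UNIV)"
    using g_C1 z unfolding C1_on_def by blast
  then show "((\<lambda>z. g (fst z) (snd z)) has_derivative g' z) (at z within {0..1} \<times> UNIV)"
    by (simp add: case_prod_beta')
  have "linear (\<lambda>v. L' (fst z, snd z, w) (0, 0, v))" for w
    by (intro bounded_linear.linear bounded_linear_compose[OF blinfun.bounded_linear_right]
        bounded_linear_Pair bounded_linear_zero bounded_linear_ident)
  then show "convex_on UNIV (L (fst z) (snd z))"
    using tangent[OF t] by (intro convex_on_if_above_tangents) auto
next
  fix \<epsilon> :: real
  assume "0 < \<epsilon>"
  then obtain R where R: "\<And>r. R \<le> r \<Longrightarrow> r / \<theta> r < \<epsilon>"
    using order_tendstoD(2)[OF superlinear] by (auto simp: eventually_at_top_linorder)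
  have "norm u \<le> \<epsilon> * L (fst z) (snd z) u" if "z \<in> {0..1} \<times> UNIV" "R \<le> norm u" for z u
  proof -
    have "fst z \<in> {0..1}"
      using that(1) by (auto simp: mem_Times_iff)
    from coercive[OF this] R[OF that(2)] \<open>0 < \<epsilon>\<close> show ?thesis
      by (smt (verit) mult_left_mono pos_divide_less_eq)
  qed
  then show "\<exists>R. \<forall>z\<in>{0..1} \<times> UNIV. \<forall>u. R \<le> norm u \<longrightarrow> norm u \<le> \<epsilon> * L (fst z) (snd z) u"
    by blast
qed (use \<open>0 \<le> \<xi>\<close> \<open>0 < \<beta>\<close> in auto)


theorem lemma1:
  fixes L :: "real \<Rightarrow> real^'n \<Rightarrow> real^'m \<Rightarrow> real"
    and L' :: "real \<times> (real^'n) \<times> (real^'m) \<Rightarrow> (real \<times> (real^'n) \<times> (real^'m)) \<Rightarrow>\<^sub>L real"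
    and g :: "real \<Rightarrow> real^'n \<Rightarrow> ((real^'m) \<Rightarrow>\<^sub>L (real^'n))"
    and g' :: "real \<times> (real^'n) \<Rightarrow> (real \<times> (real^'n)) \<Rightarrow>\<^sub>L ((real^'m) \<Rightarrow>\<^sub>L (real^'n))"
    and \<theta> :: "real \<Rightarrow> real"
    and \<mu> \<xi> \<delta> c_g c_dg r\<^sub>0 T\<^sub>0 :: real
  assumes L_C1: "C1_on ({0..1} \<times> UNIV \<times> UNIV) (\<lambda>(t, x, u). L t x u) L'"
    and g_C1: "C1_on ({0..1} \<times> UNIV) (\<lambda>(t, x). g t x) g'"
    (* (C1) *)
    and C1a: "\<And>t x u. t \<in> {0..1} \<Longrightarrow> L t x u \<ge> \<theta> (norm u) \<and> \<theta> (norm u) > 0"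
    and C1b: "((\<lambda>r. r / \<theta> r) \<longlongrightarrow> 0) at_top"
    (* (C2) *)
    and mu_pos: "\<mu> > 0"
    and C2: "\<And>t x u v. t \<in> {0..1} \<Longrightarrow>
               L t x u + L' (t, x, u) (0, 0, v - u) + \<mu> / 2 * (norm (v - u))\<^sup>2 \<le> L t x v"
    (* (C3) *)
    and xi_pos: "\<xi> > 0" and delta_pos: "\<delta> > 0"
    and C3: "\<And>t x u. t \<in> {0..1} \<Longrightarrow>
               onorm (\<lambda>(s, y). L' (t, x, u) (s, y, 0)) * norm (g t x u) \<le> \<xi> * L t x u + \<delta>"
    (* (C4) *)
    and cg_pos: "c_g > 0" and cdg_pos: "c_dg > 0"
    and C4: "\<And>t x. t \<in> {0..1} \<Longrightarrow> norm (g t x) \<le> c_g \<and> norm (g' (t, x)) \<le> c_dg"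
    (* constants *)
    and r0_pos: "r\<^sub>0 > 0" and r0: "\<And>r. r \<ge> r\<^sub>0 \<Longrightarrow> \<theta> r \<ge> r"
    and T0: "T\<^sub>0 \<in> {0<..<1}"
    and beta: "let c = r\<^sub>0 + integral {0..1} (\<lambda>t. L t 0 0);
                   \<Omega> = {0..1} \<times> cball 0 (c_g * c);
                   \<sigma> = (\<lambda>r. SUP (t, x, u) \<in> {(t, x, u). (t, x) \<in> \<Omega> \<and> norm u \<le> r}.
                                L' (t, x, u) (0, 0, u) - L t x u)
               in \<sigma> ((c + 1) / T\<^sub>0) > \<delta> / \<xi>"
  shows "let c = r\<^sub>0 + integral {0..1} (\<lambda>t. L t 0 0);
             \<Omega> = {0..1} \<times> cball 0 (c_g * c);
             \<sigma> = (\<lambda>r. SUP (t, x, u) \<in> {(t, x, u). (t, x) \<in> \<Omega> \<and> norm u \<le> r}.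
                          L' (t, x, u) (0, 0, u) - L t x u);
             \<beta> = \<sigma> ((c + 1) / T\<^sub>0);
             G = (\<lambda>t y. {(\<rho> / (L t y w + \<beta>), (\<rho> / (L t y w + \<beta>)) *\<^sub>R g t y w)
                          | w \<rho>. \<rho> \<in> {0..1}})
         in (\<forall>t\<in>{0..1}. \<forall>y. G t y \<noteq> {} \<and> convex (G t y) \<and> compact (G t y)) \<and>
            (\<exists>K. \<forall>p\<in>\<Omega>. \<forall>q\<in>\<Omega>.
                 hausdorff_dist (case_prod G p) (case_prod G q) \<le> K * dist p q)"
proof -
  \<comment> \<open>Of the constants, only \<open>\<beta> > 0\<close> matters.\<close>
  define c where "c = r\<^sub>0 + integral {0..1} (\<lambda>t. L t 0 0)"
  define \<beta> where "\<beta> = (SUP (t, x, u) \<in> {(t, x, u). (t, x) \<in> {0..1} \<times> cball 0 (c_g * c) \<and> norm u \<le> (c + 1) / T\<^sub>0}.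
                          L' (t, x, u) (0, 0, u) - L t x u)"
  have "\<delta> / \<xi> < \<beta>"
    using beta unfolding Let_def c_def[symmetric] \<beta>_def[symmetric] .
  then have "0 < \<beta>"
    using xi_pos delta_pos by (smt (verit) divide_pos_pos)
  have tangent: "L t x u + L' (t, x, u) (0, 0, v - u) \<le> L t x v" if "t \<in> {0..1}" for t x u v
  proof -
    have "0 \<le> \<mu> / 2 * (norm (v - u))\<^sup>2"
      using mu_pos by simp
    then show ?thesis
      using C2[OF that, where x=x and u=u and v=v] by linarith
  qed
  interpret rescaled_dynamics "{0..1} \<times> UNIV" "\<lambda>z. L (fst z) (snd z)"
    "\<lambda>z u h. L' (fst z, snd z, u) (fst h, snd h, 0)" "\<lambda>z. g (fst z) (snd z)"
    "\<lambda>z. blinfun_apply (g' z)" c_g c_dg "max \<xi> (\<delta> / \<beta>)" \<beta>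
    using rescaled_dynamics_if_conditions[OF L_C1 g_C1 C1a C1b tangent C3 C4] xi_pos \<open>0 < \<beta>\<close>
    by simp
  define \<Omega> where "\<Omega> = {0..1::real} \<times> cball (0 :: real^'n) (c_g * c)"
  have \<Omega>: "compact \<Omega>" "convex \<Omega>" "\<Omega> \<subseteq> {0..1} \<times> UNIV"
    unfolding \<Omega>_def by (auto intro!: compact_Times convex_Times)
  have "\<exists>K. \<forall>p\<in>\<Omega>. \<forall>q\<in>\<Omega>. hausdorff_dist (G p) (G q) \<le> K * dist p q"
    by (rule G_lipschitz_on[OF \<Omega> onorm_partial_bounded_if_C1_on[OF L_C1 \<Omega>(1,3)]])
  moreover have "\<forall>t\<in>{0..1}. \<forall>y. G (t, y) \<noteq> {} \<and> convex (G (t, y)) \<and> compact (G (t, y))"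
    using zero_mem_G convex_G compact_G by blast
  ultimately show ?thesis
    unfolding Let_def c_def[symmetric] \<beta>_def[symmetric] \<Omega>_def
    by (simp add: G_def case_prod_beta)
qed

end
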